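(* Let $G$ be a connected, locally finite multigraph without self-loops, either finite with a boundary vertex $\partial$ or infinite (with no boundary), with i.i.d. Exponential$(1)$ weights on its oriented edges. Then the loop contracting random walk started at $x$ has the same law as the CLEB walk started at $x$: the sequence of oriented edges (viewed as edges of $G$) selected at successive steps by the CLEB walk has the same law as the sequence selected by the LCRW. In fact the two processes can be coupled so that at every step the LCRW selects the same oriented edge as the CLEB walk.
   Context: Contraction of an oriented cycle $C$: remove the vertices of $C$ and all oriented edges with both endpoints in $C$, add a new vertex $v_C$, and replace each oriented edge with exactly one endpoint in $C$ by the edge with that endpoint replaced by $v_C$; edges of contracted graphs are identified with edges of $G$. CLEB walk from $x$ (generic weights): $G_0=G$, $U_0$ the weights, $P_0$ the empty path at $x$, current vertex $v_1=x$; at step $j$, subtract the minimum current weight of the outgoing edges of $v_j$ in $G_{j-1}$ from all these outgoing edges and select the unique outgoing edge $\vec e$ of $v_j$ now of weight $0$; if its head is not on the path $P_{j-1}$, extend the path by $\vec e$ and move to its head (stopping if the head is $\partial$); if its head is a vertex $y$ of $P_{j-1}$, contract the cycle consisting of the part of $P_{j-1}$ from $y$ to $v_j$ and $\vec e$ (keeping the modified weights), truncate the path at $y$, and move to the contracted vertex. LCRW from $x$: same dynamics on paths and contractions, except that at each step the edge $\vec e$ is chosen uniformly at random (with multiplicity, independently of the past) among the outgoing edges of the current vertex in the current contracted graph. *)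

theory Defs
  imports "HOL-Probability.Probability"
begin

text \<open>Multigraph given by its set of oriented edges E (type 'e), tail/head maps and
  the orientation reversal rv; vertex set V (type 'v).\<close>

definition multigraph :: "'v set \<Rightarrow> 'e set \<Rightarrow> ('e \<Rightarrow> 'v) \<Rightarrow> ('e \<Rightarrow> 'v) \<Rightarrow> ('e \<Rightarrow> 'e) \<Rightarrow> bool" where
  "multigraph V E tlv hdv rv \<longleftrightarrow>
     (\<forall>e\<in>E. tlv e \<in> V \<and> hdv e \<in> V \<and> tlv e \<noteq> hdv e \<and>
        rv e \<in> E \<and> rv e \<noteq> e \<and> rv (rv e) = e \<and> tlv (rv e) = hdv e \<and> hdv (rv e) = tlv e)"

definition locally_finite :: "'v set \<Rightarrow> 'e set \<Rightarrow> ('e \<Rightarrow> 'v) \<Rightarrow> bool" where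
  "locally_finite V E tlv \<longleftrightarrow> (\<forall>v\<in>V. finite {e\<in>E. tlv e = v})"

definition connected_graph :: "'v set \<Rightarrow> 'e set \<Rightarrow> ('e \<Rightarrow> 'v) \<Rightarrow> ('e \<Rightarrow> 'v) \<Rightarrow> bool" where
  "connected_graph V E tlv hdv \<longleftrightarrow>
     (\<forall>u\<in>V. \<forall>v\<in>V. (u, v) \<in> {(tlv e, hdv e) | e. e \<in> E}\<^sup>*)"

text \<open>State of the walk: a map sending each vertex of G to the vertex of the current
  contracted graph containing it (a set of vertices of G, initially singletons), and
  the current path as the list of its vertices (vertices of the contracted graph);
  the current vertex is the last entry.\<close>

type_synonym 'v wstate = "('v \<Rightarrow> 'v set) \<times> 'v set list"

definition init_state :: "'v \<Rightarrow> 'v wstate" where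
  "init_state x = ((\<lambda>v. {v}), [{x}])"

text \<open>Outgoing oriented edges of a vertex B of the current contracted graph
  (edges with both endpoints inside B have been removed by contraction).\<close>
definition out_edges :: "'e set \<Rightarrow> ('e \<Rightarrow> 'v) \<Rightarrow> ('e \<Rightarrow> 'v) \<Rightarrow> 'v set \<Rightarrow> 'e set" where
  "out_edges E tlv hdv B = {e\<in>E. tlv e \<in> B \<and> hdv e \<notin> B}"

definition cur_out :: "'e set \<Rightarrow> ('e \<Rightarrow> 'v) \<Rightarrow> ('e \<Rightarrow> 'v) \<Rightarrow> 'v wstate \<Rightarrow> 'e set" where
  "cur_out E tlv hdv st = out_edges E tlv hdv (last (snd st))"

definition stopped :: "'v option \<Rightarrow> 'v wstate \<Rightarrow> bool" where
  "stopped bd st = (case bd of None \<Rightarrow> False | Some d \<Rightarrow> d \<in> last (snd st))"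

text \<open>Path/contraction dynamics after selecting the oriented edge e out of the current
  vertex: extend the path if the head is not on the path, otherwise contract the cycle
  formed by the part of the path from the head to the current vertex plus e, truncate
  the path there and move to the contracted vertex.\<close>
definition walk_step :: "('e \<Rightarrow> 'v) \<Rightarrow> 'v wstate \<Rightarrow> 'e \<Rightarrow> 'v wstate" where
  "walk_step hdv st e =
     (let part = fst st; path = snd st; H = part (hdv e) in
      if H \<in> set path then
        (let C = \<Union> (set (dropWhile (\<lambda>B. B \<noteq> H) path)) in
          ((\<lambda>v. if v \<in> C then C else part v), takeWhile (\<lambda>B. B \<noteq> H) path @ [C]))
      else (part, path @ [H]))"

text \<open>CLEB: the selected edge is the one of minimal current weight among the outgoing
  edges (unique for generic weights, which holds almost surely).\<close>
definition cleb_choice :: "'e set \<Rightarrow> ('e \<Rightarrow> real) \<Rightarrow> 'e" where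
  "cleb_choice Out U = (SOME e. e \<in> Out \<and> (\<forall>f\<in>Out. U e \<le> U f))"

primrec cleb_state ::
  "'e set \<Rightarrow> ('e \<Rightarrow> 'v) \<Rightarrow> ('e \<Rightarrow> 'v) \<Rightarrow> 'v option \<Rightarrow> 'v \<Rightarrow> ('e \<Rightarrow> real) \<Rightarrow> nat
     \<Rightarrow> 'v wstate \<times> ('e \<Rightarrow> real)" where
  "cleb_state E tlv hdv bd x w 0 = (init_state x, w)"
| "cleb_state E tlv hdv bd x w (Suc n) =
     (let st = fst (cleb_state E tlv hdv bd x w n); U = snd (cleb_state E tlv hdv bd x w n) in
      if stopped bd st then (st, U)
      else (let Out = cur_out E tlv hdv st; e = cleb_choice Out U in
        (walk_step hdv st e, (\<lambda>f. if f \<in> Out then U f - U e else U f))))"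

text \<open>Oriented edge selected by CLEB at step n+1 (None once the walk has stopped).\<close>
definition cleb_sel ::
  "'e set \<Rightarrow> ('e \<Rightarrow> 'v) \<Rightarrow> ('e \<Rightarrow> 'v) \<Rightarrow> 'v option \<Rightarrow> 'v \<Rightarrow> ('e \<Rightarrow> real) \<Rightarrow> nat \<Rightarrow> 'e option" where
  "cleb_sel E tlv hdv bd x w n =
     (let st = fst (cleb_state E tlv hdv bd x w n); U = snd (cleb_state E tlv hdv bd x w n) in
      if stopped bd st then None else Some (cleb_choice (cur_out E tlv hdv st) U))"

text \<open>LCRW law: probability that its successive selections (None after stopping)
  begin with the given finite list, each step choosing uniformly (with multiplicity)
  among the outgoing edges of the current vertex, independently of the past.\<close>
fun lcrw_prob ::
  "'e set \<Rightarrow> ('e \<Rightarrow> 'v) \<Rightarrow> ('e \<Rightarrow> 'v) \<Rightarrow> 'v option \<Rightarrow> 'v wstate \<Rightarrow> 'e option list \<Rightarrow> real" where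
  "lcrw_prob E tlv hdv bd st [] = 1"
| "lcrw_prob E tlv hdv bd st (s # ss) =
     (if stopped bd st then (if s = None then lcrw_prob E tlv hdv bd st ss else 0)
      else (case s of None \<Rightarrow> 0
            | Some e \<Rightarrow> if e \<in> cur_out E tlv hdv st
                       then lcrw_prob E tlv hdv bd (walk_step hdv st e) ss / real (card (cur_out E tlv hdv st))
                       else 0))"

definition exp_weights :: "'e set \<Rightarrow> ('e \<Rightarrow> real) measure" where
  "exp_weights E = PiM E (\<lambda>_. density lborel (exponential_density 1))"

end

theory Submission
  imports Defs
begin

(* The proof rests on the memorylessness of the exponential distribution.  Let Out be the
   set of outgoing edges of the current vertex and n its size.  For e in Out, the event that
   e carries the minimal weight on Out has probability 1/n, and conditionally on it the
   excesses w f - w e (f in Out, f ~= e), the rescaled minimum n * w e and all other weights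
   are again i.i.d. Exp(1).  After the step, the weights of CLEB agree with these except on e,
   and e is never an outgoing edge again: its endpoints now lie in consecutive vertices of the
   path or inside one contracted vertex.  Hence the remaining selections are those of CLEB
   started afresh from the new state with i.i.d. Exp(1) weights, and induction on the number
   of observed steps gives the uniform transition probabilities 1/n of the LCRW. *)

section \<open>Exponential weights\<close>

abbreviation exp1 :: "real measure" where
  "exp1 \<equiv> density lborel (exponential_density 1)"

lemma prob_space_exp1: "prob_space exp1"
  by (rule prob_space_exponential_density) simp

lemma exponential_density_1: "exponential_density 1 s = (if s < 0 then 0 else exp (- s))"
  by (simp add: exponential_density_def)

lemma AE_exp1_nonneg: "AE s in exp1. 0 \<le> s"
  by (subst AE_density) (auto simp: exponential_density_1)

(* Strict and weak minima are treated together: the choice of CLEB, whose ties are broken by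
   SOME, lies between the two events, and both have the same probability. *)
definition below :: "bool \<Rightarrow> real \<Rightarrow> real \<Rightarrow> bool" where
  "below strict a c \<longleftrightarrow> (if strict then a < c else a \<le> c)"

lemma pred_below [measurable (raw)]:
  assumes [measurable]: "f \<in> borel_measurable M" "g \<in> borel_measurable M"
  shows "Measurable.pred M (\<lambda>x. below strict (f x) (g x))"
  unfolding below_def by (cases strict) simp_all

lemma emeasure_exp1_excess:
  assumes "0 \<le> x" and [measurable]: "Y \<in> sets borel"
  shows "emeasure exp1 {s. below strict x s \<and> s - x \<in> Y} = ennreal (exp (- x)) * emeasure exp1 Y"
proof -
  have [measurable]: "{s. below strict x s \<and> s - x \<in> Y} \<in> sets borel"
    by measurable
  let ?g = "\<lambda>s. ennreal (exponential_density 1 s) * indicator {s. below strict x s \<and> s - x \<in> Y} s"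
  have "emeasure exp1 {s. below strict x s \<and> s - x \<in> Y} = (\<integral>\<^sup>+ s. ?g s \<partial>lborel)"
    by (subst emeasure_density) (auto intro!: nn_integral_cong simp: mult.commute)
  also have "\<dots> = (\<integral>\<^sup>+ u. ?g (x + 1 * u) \<partial>lborel)"
    using nn_integral_real_affine[of ?g 1 x] by simp
  also have "\<dots> = (\<integral>\<^sup>+ u. ennreal (exp (- x)) * (ennreal (exponential_density 1 u) * indicator Y u) \<partial>lborel)"
  proof (rule nn_integral_cong_AE)
    show "AE u in lborel. ?g (x + 1 * u) = ennreal (exp (- x)) * (ennreal (exponential_density 1 u) * indicator Y u)"
      using AE_lborel_singleton[of 0] \<comment> \<open>strict and weak comparison differ at \<open>u = 0\<close>\<close>
    proof eventually_elim
      case (elim u)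
      then consider "u < 0" | "u > 0" by linarith
      then show ?case
        using \<open>0 \<le> x\<close>
        by cases (auto simp: below_def exponential_density_1 indicator_def exp_add[symmetric] ennreal_mult[symmetric])
    qed
  qed
  also have "\<dots> = ennreal (exp (- x)) * emeasure exp1 Y"
    by (simp add: nn_integral_cmult emeasure_density mult.commute)
  finally show ?thesis .
qed

(* exp (- x) ^ (n - 1) is the probability that n - 1 further weights exceed x: n times the
   minimum of n independent Exp(1) weights is again Exp(1). *)
lemma nn_integral_exp1_scaled_indicator:
  assumes "n \<ge> 1" and [measurable]: "A \<in> sets borel"
  shows "(\<integral>\<^sup>+ x. ennreal (exp (- x)) ^ (n - 1) * indicator A (real n * x) \<partial>exp1)
    = emeasure exp1 A / of_nat n"
proof -
  let ?h = "\<lambda>s. ennreal (exponential_density 1 s) * indicator A s"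
  have "emeasure exp1 A = (\<integral>\<^sup>+ s. ?h s \<partial>lborel)"
    by (subst emeasure_density) (auto intro!: nn_integral_cong simp: mult.commute)
  also have "\<dots> = of_nat n * (\<integral>\<^sup>+ x. ?h (real n * x) \<partial>lborel)"
    using nn_integral_real_affine[of ?h "real n" 0] assms
    by (simp add: ennreal_of_nat_eq_real_of_nat)
  also have "(\<integral>\<^sup>+ x. ?h (real n * x) \<partial>lborel) = (\<integral>\<^sup>+ x.
      ennreal (exponential_density 1 x) * (ennreal (exp (- x)) ^ (n - 1) * indicator A (real n * x)) \<partial>lborel)"
  proof (rule nn_integral_cong)
    fix x :: real
    have "exp (- (real n * x)) = exp (- x) ^ n"
      by (simp add: exp_of_nat_mult[symmetric])
    also have "\<dots> = exp (- x) * exp (- x) ^ (n - 1)"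
      using \<open>n \<ge> 1\<close> by (simp add: power_eq_if)
    finally have exp_n: "ennreal (exp (- (real n * x))) = ennreal (exp (- x)) * ennreal (exp (- x)) ^ (n - 1)"
      by (simp add: ennreal_mult ennreal_power)
    have neg: "real n * x < 0 \<longleftrightarrow> x < 0"
      using \<open>n \<ge> 1\<close> by (simp add: mult_less_0_iff)
    show "?h (real n * x)
        = ennreal (exponential_density 1 x) * (ennreal (exp (- x)) ^ (n - 1) * indicator A (real n * x))"
      using exp_n neg by (auto simp: exponential_density_1 mult.assoc)
  qed
  also have "\<dots> = (\<integral>\<^sup>+ x. ennreal (exp (- x)) ^ (n - 1) * indicator A (real n * x) \<partial>exp1)"
    by (simp add: nn_integral_density)
  finally have "emeasure exp1 A = of_nat n * (\<integral>\<^sup>+ x. ennreal (exp (- x)) ^ (n - 1) * indicator A (real n * x) \<partial>exp1)" .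
  moreover have "(of_nat n :: ennreal) \<noteq> 0"
    using \<open>n \<ge> 1\<close> by simp
  ultimately show ?thesis
    by (simp add: mult.commute[of "of_nat n"] ennreal_mult_divide_eq)
qed

lemma product_prob_space_exp1: "product_prob_space (\<lambda>_. exp1)"
  unfolding product_prob_space_def product_sigma_finite_def product_prob_space_axioms_def
  using prob_space_exp1 by (auto simp: prob_space_imp_sigma_finite)

lemma prob_space_exp_weights: "prob_space (exp_weights I)"
  unfolding exp_weights_def using prob_space_exp1 by (intro prob_space_PiM)

lemma space_exp_weights: "space (exp_weights I) = I \<rightarrow>\<^sub>E UNIV"
  by (simp add: exp_weights_def space_PiM)

lemma measurable_exp_weights_component [measurable]:
  "j \<in> I \<Longrightarrow> (\<lambda>w. w j) \<in> borel_measurable (exp_weights I)"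
  unfolding exp_weights_def by measurable

lemma measurable_exp_weightsI:
  assumes "\<And>i. i \<in> I \<Longrightarrow> (\<lambda>x. f x i) \<in> borel_measurable N"
    and "\<And>x. x \<in> space N \<Longrightarrow> f x \<in> space (exp_weights I)"
  shows "f \<in> measurable N (exp_weights I)"
  unfolding exp_weights_def
  using assms by (intro measurable_PiM_single') (auto simp: space_exp_weights measurable_cong_sets[OF refl sets_density])

lemma emeasure_exp_weights_split:
  assumes "e \<in> I" and Z: "Z \<in> sets (exp_weights I)"
  shows "emeasure (exp_weights I) Z = (\<integral>\<^sup>+ x. emeasure (exp_weights (I - {e}))
      {X \<in> space (exp_weights (I - {e})). X(e := x) \<in> Z} \<partial>exp1)"
proof -
  let ?N = "exp_weights (I - {e})" and ?g = "\<lambda>(x, X). X(e := x)"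
  interpret N: prob_space ?N by (rule prob_space_exp_weights)
  have distr_eq: "distr (exp1 \<Otimes>\<^sub>M ?N) (exp_weights I) ?g = exp_weights I"
    using distr_pair_PiM_eq_PiM[of "I - {e}" "\<lambda>_. exp1" e] prob_space_exp1 assms(1)
    by (simp add: exp_weights_def insert_absorb)
  have g: "?g \<in> measurable (exp1 \<Otimes>\<^sub>M ?N) (exp_weights I)"
    unfolding exp_weights_def case_prod_beta'
    by (rule measurable_fun_upd[where J="I - {e}"]) (use assms in auto)
  have "emeasure (exp_weights I) Z = emeasure (exp1 \<Otimes>\<^sub>M ?N) (?g -` Z \<inter> space (exp1 \<Otimes>\<^sub>M ?N))"
    using emeasure_distr[OF g Z] by (simp add: distr_eq)
  also have "\<dots> = (\<integral>\<^sup>+ x. emeasure ?N (Pair x -` (?g -` Z \<inter> space (exp1 \<Otimes>\<^sub>M ?N))) \<partial>exp1)"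
    using measurable_sets[OF g Z] by (rule N.emeasure_pair_measure_alt)
  also have "\<dots> = (\<integral>\<^sup>+ x. emeasure ?N {X \<in> space ?N. X(e := x) \<in> Z} \<partial>exp1)"
    by (intro nn_integral_cong arg_cong[where f="emeasure ?N"]) (auto simp: space_pair_measure)
  finally show ?thesis .
qed

section \<open>Residual weights at the minimum\<close>

definition residual_weights :: "'e set \<Rightarrow> 'e \<Rightarrow> ('e \<Rightarrow> real) \<Rightarrow> 'e \<Rightarrow> real" where
  "residual_weights Out e w f =
     (if f \<in> Out - {e} then w f - w e else if f = e then real (card Out) * w e else w f)"

lemma residual_weights_in_space:
  assumes "Out \<subseteq> I" "e \<in> Out" "w \<in> space (exp_weights I)"
  shows "residual_weights Out e w \<in> space (exp_weights I)"
  using assms by (auto simp: space_exp_weights residual_weights_def PiE_def extensional_def)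

lemma measurable_residual_weights:
  assumes "Out \<subseteq> I" "e \<in> Out"
  shows "residual_weights Out e \<in> measurable (exp_weights I) (exp_weights I)"
proof (rule measurable_exp_weightsI)
  fix j assume [measurable]: "j \<in> I"
  have [measurable]: "e \<in> I" using assms by auto
  show "(\<lambda>w. residual_weights Out e w j) \<in> borel_measurable (exp_weights I)"
    unfolding residual_weights_def by (cases "j \<in> Out - {e}"; cases "j = e") simp_all
qed (use residual_weights_in_space[OF assms] in blast)

definition min_event :: "bool \<Rightarrow> 'e set \<Rightarrow> 'e set \<Rightarrow> 'e \<Rightarrow> ('e \<Rightarrow> real) set" where
  "min_event strict I Out e = {w \<in> space (exp_weights I). \<forall>f\<in>Out - {e}. below strict (w e) (w f)}"

lemma sets_min_event:
  assumes "finite Out" "Out \<subseteq> I" "e \<in> Out"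
  shows "min_event strict I Out e \<in> sets (exp_weights I)"
  unfolding min_event_def
proof (rule sets.sets_Collect_finite_All)
  fix f assume "f \<in> Out - {e}"
  then have [measurable]: "f \<in> I" "e \<in> I" using assms by auto
  show "{w \<in> space (exp_weights I). below strict (w e) (w f)} \<in> sets (exp_weights I)"
    by measurable
qed (use assms in auto)

lemma prod_emeasure_exp1_excess:
  assumes "finite K" "0 \<le> x" "\<And>f. A f \<in> sets borel"
  shows "(\<Prod>f\<in>K. emeasure exp1 (if f \<in> Out then {s. below strict x s \<and> s - x \<in> A f} else A f))
    = ennreal (exp (- x)) ^ card (K \<inter> Out) * (\<Prod>f\<in>K. emeasure exp1 (A f))"
  using assms(1)
proof (induction K rule: finite_induct)
  case (insert f K)
  then show ?case
    using emeasure_exp1_excess[OF assms(2,3)] by (cases "f \<in> Out") (simp_all add: ac_simps)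
qed simp

lemma min_event_residual_cylinder_section:
  assumes "Out \<subseteq> J" "J \<subseteq> I" "e \<in> Out"
  shows "{X \<in> space (exp_weights (I - {e})).
      X(e := x) \<in> min_event strict I Out e \<inter> {w. \<forall>j\<in>J. residual_weights Out e w j \<in> A j}}
    = (if real (card Out) * x \<in> A e then {X \<in> space (exp_weights (I - {e})). \<forall>f\<in>J - {e}.
        X f \<in> (if f \<in> Out then {s. below strict x s \<and> s - x \<in> A f} else A f)} else {})"
  using assms by (auto simp: min_event_def space_exp_weights residual_weights_def PiE_iff extensional_def)

lemma sets_min_event_residual_cylinder:
  assumes "finite J" "Out \<subseteq> J" "J \<subseteq> I" "e \<in> Out" and A: "\<And>j. A j \<in> sets borel"
  shows "min_event strict I Out e \<inter> {w. \<forall>j\<in>J. residual_weights Out e w j \<in> A j} \<in> sets (exp_weights I)"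
proof -
  have "Out \<subseteq> I" using assms(2,3) by blast
  have "(\<lambda>w. residual_weights Out e w j) \<in> borel_measurable (exp_weights I)" if "j \<in> J" for j
    using measurable_compose[OF measurable_residual_weights[OF \<open>Out \<subseteq> I\<close> \<open>e \<in> Out\<close>]
        measurable_exp_weights_component] that assms(3) by auto
  then have "{w \<in> space (exp_weights I). \<forall>j\<in>J. residual_weights Out e w j \<in> A j} \<in> sets (exp_weights I)"
    using assms(1) A by (intro sets.sets_Collect_finite_All measurable_sets_borel) auto
  moreover have "min_event strict I Out e \<inter> {w. \<forall>j\<in>J. residual_weights Out e w j \<in> A j}
      = min_event strict I Out e \<inter> {w \<in> space (exp_weights I). \<forall>j\<in>J. residual_weights Out e w j \<in> A j}"
    by (auto simp: min_event_def)
  ultimately show ?thesis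
    using sets_min_event[OF finite_subset[OF assms(2,1)] \<open>Out \<subseteq> I\<close> assms(4)] by auto
qed

lemma emeasure_min_event_residual_cylinder_slice:
  assumes "finite J" "Out \<subseteq> J" "J \<subseteq> I" "e \<in> Out" and A: "\<And>j. A j \<in> sets borel" and "0 \<le> x"
  shows "emeasure (exp_weights (I - {e})) {X \<in> space (exp_weights (I - {e})).
      X(e := x) \<in> min_event strict I Out e \<inter> {w. \<forall>j\<in>J. residual_weights Out e w j \<in> A j}}
    = indicator (A e) (real (card Out) * x)
      * (ennreal (exp (- x)) ^ (card Out - 1) * (\<Prod>f\<in>J - {e}. emeasure exp1 (A f)))"
proof -
  let ?N = "exp_weights (I - {e})"
  let ?B = "\<lambda>f. if f \<in> Out then {s. below strict x s \<and> s - x \<in> A f} else A f"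
  have "(J - {e}) \<inter> Out = Out - {e}" using assms(2) by auto
  then have card: "card ((J - {e}) \<inter> Out) = card Out - 1"
    using finite_subset[OF assms(2,1)] assms(4) by simp
  have "emeasure ?N {X \<in> space ?N. X(e := x) \<in> min_event strict I Out e \<inter> {w. \<forall>j\<in>J. residual_weights Out e w j \<in> A j}}
      = indicator (A e) (real (card Out) * x) * emeasure ?N {X \<in> space ?N. \<forall>f\<in>J - {e}. X f \<in> ?B f}"
    unfolding min_event_residual_cylinder_section[OF assms(2-4)] by (simp add: indicator_def)
  also have "emeasure ?N {X \<in> space ?N. \<forall>f\<in>J - {e}. X f \<in> ?B f} = (\<Prod>f\<in>J - {e}. emeasure exp1 (?B f))"
    unfolding exp_weights_def using assms A
    by (intro product_prob_space.emeasure_PiM_Collect[OF product_prob_space_exp1]) auto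
  also have "\<dots> = ennreal (exp (- x)) ^ (card Out - 1) * (\<Prod>f\<in>J - {e}. emeasure exp1 (A f))"
    using prod_emeasure_exp1_excess[where K="J - {e}" and A=A, OF _ \<open>0 \<le> x\<close> A] assms(1) card by simp
  finally show ?thesis .
qed

lemma emeasure_min_event_residual_cylinder:
  assumes "finite J" "Out \<subseteq> J" "J \<subseteq> I" "e \<in> Out" and A: "\<And>j. A j \<in> sets borel"
  shows "emeasure (exp_weights I) (min_event strict I Out e \<inter> {w. \<forall>j\<in>J. residual_weights Out e w j \<in> A j})
    = (\<Prod>j\<in>J. emeasure exp1 (A j)) / of_nat (card Out)"
proof -
  let ?Z = "min_event strict I Out e \<inter> {w. \<forall>j\<in>J. residual_weights Out e w j \<in> A j}"
  let ?N = "exp_weights (I - {e})" and ?n = "card Out" and ?P = "\<Prod>f\<in>J - {e}. emeasure exp1 (A f)"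
  have "?n \<ge> 1" using finite_subset[OF assms(2,1)] assms(4) by (auto simp: Suc_le_eq card_gt_0_iff)
  have "e \<in> I" using assms by auto
  have "emeasure (exp_weights I) ?Z = (\<integral>\<^sup>+ x. emeasure ?N {X \<in> space ?N. X(e := x) \<in> ?Z} \<partial>exp1)"
    by (rule emeasure_exp_weights_split[OF \<open>e \<in> I\<close> sets_min_event_residual_cylinder[OF assms]])
  also have "\<dots> = (\<integral>\<^sup>+ x. indicator (A e) (real ?n * x) * (ennreal (exp (- x)) ^ (?n - 1) * ?P) \<partial>exp1)"
  proof (rule nn_integral_cong_AE)
    show "AE x in exp1. emeasure ?N {X \<in> space ?N. X(e := x) \<in> ?Z}
        = indicator (A e) (real ?n * x) * (ennreal (exp (- x)) ^ (?n - 1) * ?P)"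
      using AE_exp1_nonneg by eventually_elim (rule emeasure_min_event_residual_cylinder_slice[OF assms])
  qed
  also have "\<dots> = ?P * (\<integral>\<^sup>+ x. ennreal (exp (- x)) ^ (?n - 1) * indicator (A e) (real ?n * x) \<partial>exp1)"
    using A by (subst nn_integral_cmult[symmetric]) (auto intro!: nn_integral_cong simp: ac_simps)
  also have "\<dots> = ?P * emeasure exp1 (A e) / of_nat ?n"
    using nn_integral_exp1_scaled_indicator[OF \<open>?n \<ge> 1\<close> A] by (simp add: ennreal_times_divide)
  also have "?P * emeasure exp1 (A e) = (\<Prod>j\<in>J. emeasure exp1 (A j))"
    using prod.remove[OF assms(1), of e "\<lambda>j. emeasure exp1 (A j)"] assms(2,4) by (auto simp: mult.commute)
  finally show ?thesis .
qed

lemma emeasure_min_event_residual_prod_emb: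
  assumes "finite Out" "Out \<subseteq> I" "e \<in> Out" "finite J" "J \<subseteq> I" "\<And>j. j \<in> J \<Longrightarrow> X j \<in> sets exp1"
  shows "emeasure (exp_weights I)
      (min_event strict I Out e \<inter> residual_weights Out e -` prod_emb I (\<lambda>_. exp1) J (Pi\<^sub>E J X))
    = (\<Prod>j\<in>J. emeasure exp1 (X j)) / of_nat (card Out)"
proof -
  let ?X = "\<lambda>j. if j \<in> J then X j else UNIV"
  have "min_event strict I Out e \<inter> residual_weights Out e -` prod_emb I (\<lambda>_. exp1) J (Pi\<^sub>E J X)
      = min_event strict I Out e \<inter> {w. \<forall>j\<in>J \<union> Out. residual_weights Out e w j \<in> ?X j}"
    using residual_weights_in_space[OF assms(2,3)] assms(5)
    by (auto simp: min_event_def prod_emb_def space_exp_weights PiE_iff)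
  also have "emeasure (exp_weights I) \<dots> = (\<Prod>j\<in>J \<union> Out. emeasure exp1 (?X j)) / of_nat (card Out)"
    using assms by (intro emeasure_min_event_residual_cylinder) auto
  also have "(\<Prod>j\<in>J \<union> Out. emeasure exp1 (?X j)) = (\<Prod>j\<in>J. emeasure exp1 (X j))"
    using assms(1,4) prob_space.emeasure_space_1[OF prob_space_exp1]
    by (intro prod.mono_neutral_cong_right) auto
  finally show ?thesis .
qed

lemma emeasure_min_event_residual:
  assumes "finite Out" "Out \<subseteq> I" "e \<in> Out" and A: "A \<in> sets (exp_weights I)"
  shows "emeasure (exp_weights I) (min_event strict I Out e \<inter> residual_weights Out e -` A)
    = emeasure (exp_weights I) A / of_nat (card Out)"
proof -
  let ?M = "exp_weights I" and ?S = "min_event strict I Out e" and ?T = "residual_weights Out e"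
  let ?P = "distr (density ?M (indicator ?S)) ?M ?T" and ?Q = "scale_measure (1 / of_nat (card Out)) ?M"
  interpret M: product_prob_space "\<lambda>_. exp1" I by (rule product_prob_space_exp1)
  have S: "?S \<in> sets ?M" by (rule sets_min_event[OF assms(1-3)])
  have T: "?T \<in> measurable ?M ?M" by (rule measurable_residual_weights[OF assms(2,3)])
  have preimage: "emeasure ?P X = emeasure ?M (?S \<inter> ?T -` X)" if "X \<in> sets ?M" for X
  proof -
    have "?T -` X \<inter> space ?M \<in> sets ?M" using measurable_sets[OF T that] .
    moreover have "?S \<inter> ?T -` X = ?S \<inter> (?T -` X \<inter> space ?M)" by (auto simp: min_event_def)
    ultimately show ?thesis
      using that S T by (simp add: emeasure_distr emeasure_restricted)
  qed
  have "?Q = ?P"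
  proof (rule measure_eqI_PiM_infinite[where I=I and M="\<lambda>_. exp1"])
    show "finite_measure ?Q"
      using assms(1,3) M.emeasure_space_1
      by (intro finite_measureI) (auto simp: space_scale_measure exp_weights_def ennreal_divide_eq_top_iff)
  next
    fix J X assume J: "finite J" "J \<subseteq> I" and X: "\<And>j. j \<in> J \<Longrightarrow> X j \<in> sets exp1"
    have "prod_emb I (\<lambda>_. exp1) J (Pi\<^sub>E J X) \<in> sets ?M"
      unfolding exp_weights_def using J X by (intro sets_PiM_I) auto
    then show "emeasure ?Q (prod_emb I (\<lambda>_. exp1) J (Pi\<^sub>E J X)) = emeasure ?P (prod_emb I (\<lambda>_. exp1) J (Pi\<^sub>E J X))"
      using J X preimage emeasure_min_event_residual_prod_emb[OF assms(1-3) J X]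
      by (simp add: exp_weights_def M.emeasure_PiM_emb ennreal_divide_times ennreal_times_divide)
  qed (simp_all add: exp_weights_def)
  then have "emeasure ?M (?S \<inter> ?T -` A) = emeasure ?Q A"
    using preimage[OF A] by simp
  then show ?thesis
    by (simp add: ennreal_divide_times ennreal_times_divide)
qed

lemma cleb_choice_min:
  assumes "finite Out" "Out \<noteq> {}"
  shows "cleb_choice Out U \<in> Out \<and> (\<forall>f\<in>Out. U (cleb_choice Out U) \<le> U f)"
proof -
  have "\<exists>e. e \<in> Out \<and> (\<forall>f\<in>Out. U e \<le> U f)"
    using ex_is_arg_min_if_finite[OF assms, of U] by (auto simp: is_arg_min_def not_less)
  then show ?thesis
    unfolding cleb_choice_def by (rule someI_ex)
qed

lemma cleb_choice_eqI:
  assumes "e \<in> Out" "\<forall>f\<in>Out - {e}. U e < U f"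
  shows "cleb_choice Out U = e"
  unfolding cleb_choice_def
proof (rule some_equality)
  show "e \<in> Out \<and> (\<forall>f\<in>Out. U e \<le> U f)"
    using assms by (auto intro: less_imp_le)
next
  fix e' assume "e' \<in> Out \<and> (\<forall>f\<in>Out. U e' \<le> U f)"
  then show "e' = e"
    using assms by (meson DiffI empty_iff insert_iff not_le)
qed

lemma cleb_choice_cong:
  "(\<And>f. f \<in> Out \<Longrightarrow> U f = U' f) \<Longrightarrow> cleb_choice Out U = cleb_choice Out U'"
  unfolding cleb_choice_def by (metis (no_types, lifting))

lemma sets_cleb_choice:
  assumes "finite Out" "Out \<subseteq> I"
  shows "{w \<in> space (exp_weights I). cleb_choice Out w = e} \<in> sets (exp_weights I)"
proof -
  let ?M = "exp_weights I"
  let ?argmin = "\<lambda>w. {f \<in> Out. \<forall>g\<in>Out. w f \<le> w g}"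
  \<comment> \<open>\<open>cleb_choice Out w\<close> only depends on the finitely many possible sets of minimisers\<close>
  have "{w \<in> space ?M. cleb_choice Out w = e}
      = (\<Union>S\<in>{S. S \<subseteq> Out \<and> (SOME f. f \<in> S) = e}. {w \<in> space ?M. ?argmin w = S})"
    unfolding cleb_choice_def by auto
  also have "\<dots> \<in> sets ?M"
  proof (intro sets.finite_UN)
    fix S
    have "{w \<in> space ?M. w f \<le> w g} \<in> sets ?M" if "f \<in> Out" "g \<in> Out" for f g
    proof -
      have [measurable]: "f \<in> I" "g \<in> I" using that assms by auto
      show ?thesis by measurable
    qed
    then have "{w \<in> space ?M. f \<in> ?argmin w} \<in> sets ?M" if "f \<in> Out" for f
      using assms(1) that by (auto intro!: sets.sets_Collect_finite_All)
    then have "{w \<in> space ?M. \<forall>f\<in>Out. f \<in> S \<longleftrightarrow> f \<in> ?argmin w} \<in> sets ?M"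
      using assms(1) by (intro sets.sets_Collect_finite_All) auto
    moreover have "{w \<in> space ?M. ?argmin w = S} = {w \<in> space ?M. \<forall>f\<in>Out. f \<in> S \<longleftrightarrow> f \<in> ?argmin w}"
      if "S \<in> {S. S \<subseteq> Out \<and> (SOME f. f \<in> S) = e}"
      using that by blast
    ultimately show "{w \<in> space ?M. ?argmin w = S} \<in> sets ?M"
      if "S \<in> {S. S \<subseteq> Out \<and> (SOME f. f \<in> S) = e}"
      using that by simp
  qed (use assms in simp)
  finally show ?thesis .
qed

lemma emeasure_cleb_choice_residual:
  assumes "finite Out" "Out \<subseteq> I" "e \<in> Out" and A: "A \<in> sets (exp_weights I)"
  shows "emeasure (exp_weights I) ({w \<in> space (exp_weights I). cleb_choice Out w = e} \<inter> residual_weights Out e -` A)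
    = emeasure (exp_weights I) A / of_nat (card Out)"
proof -
  let ?M = "exp_weights I" and ?C = "{w \<in> space (exp_weights I). cleb_choice Out w = e}"
    and ?R = "residual_weights Out e -` A"
  have R: "X \<inter> ?R \<in> sets ?M" if "X \<in> sets ?M" for X
  proof -
    have "X \<inter> ?R = X \<inter> (?R \<inter> space ?M)" using sets.sets_into_space[OF that] by auto
    then show ?thesis
      using that measurable_sets[OF measurable_residual_weights[OF assms(2,3)] A] by auto
  qed
  have "min_event True I Out e \<subseteq> ?C"
    using cleb_choice_eqI[OF assms(3)] by (auto simp: min_event_def below_def)
  then have lower: "emeasure ?M (min_event True I Out e \<inter> ?R) \<le> emeasure ?M (?C \<inter> ?R)"
    using R[OF sets_cleb_choice[OF assms(1,2)]] by (intro emeasure_mono) auto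
  have "?C \<subseteq> min_event False I Out e"
    using cleb_choice_min[OF assms(1)] assms(3) by (fastforce simp: min_event_def below_def)
  then have upper: "emeasure ?M (?C \<inter> ?R) \<le> emeasure ?M (min_event False I Out e \<inter> ?R)"
    using R[OF sets_min_event[OF assms(1-3)]] by (intro emeasure_mono) auto
  show ?thesis
    using lower upper emeasure_min_event_residual[OF assms, of True] emeasure_min_event_residual[OF assms, of False]
    by (simp add: order_antisym)
qed

section \<open>Contraction states\<close>

lemma cur_out_subset: "cur_out E tlv hdv st \<subseteq> E"
  by (auto simp: cur_out_def out_edges_def)

lemma walk_step_extend:
  "P (hdv e) \<notin> set ps \<Longrightarrow> walk_step hdv (P, ps) e = (P, ps @ [P (hdv e)])"
  by (simp add: walk_step_def)

lemma walk_step_contract: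
  assumes "H \<notin> set pre" "P (hdv e) = H"
  shows "walk_step hdv (P, pre @ H # post) e
    = (let C = \<Union> (set (H # post)) in ((\<lambda>u. if u \<in> C then C else P u), pre @ [C]))"
proof -
  have "takeWhile (\<lambda>B. B \<noteq> H) (pre @ H # post) = pre"
    "dropWhile (\<lambda>B. B \<noteq> H) (pre @ H # post) = H # post"
    using assms(1) by (induction pre) auto
  then show ?thesis
    using assms by (simp add: walk_step_def Let_def)
qed

lemma out_edge_of_reachable:
  assumes "(a, b) \<in> {(tlv e, hdv e) | e. e \<in> E}\<^sup>*" "a \<in> L" "b \<notin> L"
  shows "\<exists>e\<in>E. tlv e \<in> L \<and> hdv e \<notin> L"
  using assms by (induction rule: rtrancl_induct) blast+

lemma consecutive_after_collapse:
  assumes "distinct (pre @ H # post)" "pre @ H # post = xs @ A # B # ys"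
    and f: "\<And>X. f X = (if X \<in> set (H # post) then C else X)"
  shows "f A = f B \<or> (\<exists>xs' ys'. pre @ [C] = xs' @ f A # f B # ys')"
proof -
  obtain us where "pre = xs @ us \<and> us @ H # post = A # B # ys \<or> pre @ us = xs \<and> H # post = us @ A # B # ys"
    using assms(2) by (auto simp: append_eq_append_conv2)
  then consider
      (in_post) "A \<in> set (H # post)" "B \<in> set (H # post)"
    | (crossing) "pre = xs @ [A]" "B = H"
    | (in_pre) zs where "pre = xs @ A # B # zs"
    by (cases us rule: remdups_adj.cases) auto
  then show ?thesis
  proof cases
    case in_post
    then show ?thesis using f by simp
  next
    case crossing
    then show ?thesis using assms(1) f by auto
  next
    case in_pre
    then have "f A = A" "f B = B" using assms(1) f by auto
    then show ?thesis using in_pre by auto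
  qed
qed

locale cleb_graph =
  fixes V :: "'v set" and E :: "'e set" and tlv hdv :: "'e \<Rightarrow> 'v" and rv :: "'e \<Rightarrow> 'e"
    and bd :: "'v option"
  assumes multigraph: "multigraph V E tlv hdv rv"
    and locally_finite: "locally_finite V E tlv"
    and connected: "connected_graph V E tlv hdv"
    and boundary: "(finite V \<and> (\<exists>d\<in>V. bd = Some d)) \<or> (infinite V \<and> bd = None)"
begin

fun valid_state :: "'v wstate \<Rightarrow> bool" where
  "valid_state (P, ps) \<longleftrightarrow>
     (\<forall>v. v \<in> P v) \<and> (\<forall>u v. v \<in> P u \<longrightarrow> P v = P u) \<and> set ps \<subseteq> range P \<and>
     distinct ps \<and> ps \<noteq> [] \<and> (\<forall>B\<in>set ps. finite B \<and> B \<subseteq> V) \<and>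
     (\<forall>v. P v \<in> set ps \<or> P v = {v})"

(* An edge used by the walk: right after the step its endpoints lie in consecutive blocks of
   the path, and later contractions can only merge these two blocks. *)
fun spent :: "'v wstate \<Rightarrow> 'e \<Rightarrow> bool" where
  "spent (P, ps) d \<longleftrightarrow>
     P (tlv d) = P (hdv d) \<or> (\<exists>xs ys. ps = xs @ P (tlv d) # P (hdv d) # ys)"

declare valid_state.simps [simp del]

lemma valid_stateI:
  assumes "\<And>v. v \<in> P v" "\<And>u v. v \<in> P u \<Longrightarrow> P v = P u" "set ps \<subseteq> range P"
    "distinct ps" "ps \<noteq> []" "\<And>B. B \<in> set ps \<Longrightarrow> finite B \<and> B \<subseteq> V"
    "\<And>v. P v \<notin> set ps \<Longrightarrow> P v = {v}"
  shows "valid_state (P, ps)"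
proof -
  have "\<forall>v. v \<in> P v" using assms(1) by blast
  moreover have "\<forall>u v. v \<in> P u \<longrightarrow> P v = P u" using assms(2) by blast
  moreover have "\<forall>B\<in>set ps. finite B \<and> B \<subseteq> V" using assms(6) by blast
  moreover have "\<forall>v. P v \<in> set ps \<or> P v = {v}" using assms(7) by blast
  ultimately show ?thesis using assms(3-5) by (simp add: valid_state.simps)
qed

lemma
  assumes "valid_state (P, ps)"
  shows valid_state_mem_block: "v \<in> P v"
    and valid_state_block_eq: "v \<in> P u \<Longrightarrow> P v = P u"
    and valid_state_path_blocks: "set ps \<subseteq> range P"
    and valid_state_distinct: "distinct ps"
    and valid_state_path_nonempty: "ps \<noteq> []"
    and valid_state_finite_block: "B \<in> set ps \<Longrightarrow> finite B \<and> B \<subseteq> V"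
    and valid_state_singleton: "P v \<notin> set ps \<Longrightarrow> P v = {v}"
  using assms by (auto simp: valid_state.simps)

lemma valid_init_state: "x \<in> V \<Longrightarrow> valid_state (init_state x)"
  unfolding init_state_def by (rule valid_stateI) auto

lemma valid_state_block_eqI:
  assumes "valid_state (P, ps)" "B \<in> set ps" "v \<in> B"
  shows "P v = B"
proof -
  obtain u where "B = P u" using valid_state_path_blocks[OF assms(1)] assms(2) by blast
  then show ?thesis using valid_state_block_eq[OF assms(1)] assms(3) by simp
qed

lemma valid_state_block_nonempty:
  assumes "valid_state (P, ps)" "B \<in> set ps"
  shows "B \<noteq> {}"
proof -
  obtain u where "B = P u" using valid_state_path_blocks[OF assms(1)] assms(2) by blast
  then show ?thesis using valid_state_mem_block[OF assms(1)] by auto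
qed

lemma finite_cur_out:
  assumes "valid_state (P, ps)"
  shows "finite (cur_out E tlv hdv (P, ps))"
proof -
  have "cur_out E tlv hdv (P, ps) \<subseteq> (\<Union>v\<in>last ps. {e\<in>E. tlv e = v})"
    by (auto simp: cur_out_def out_edges_def)
  moreover have "finite (last ps)" "last ps \<subseteq> V"
    using valid_state_finite_block[OF assms] valid_state_path_nonempty[OF assms] by simp_all
  then have "finite (\<Union>v\<in>last ps. {e\<in>E. tlv e = v})"
    using locally_finite by (intro finite_UN_I) (auto simp: locally_finite_def)
  ultimately show ?thesis
    by (rule finite_subset)
qed

lemma cur_out_nonempty:
  assumes "valid_state (P, ps)" "\<not> stopped bd (P, ps)"
  shows "cur_out E tlv hdv (P, ps) \<noteq> {}"
proof -
  let ?L = "last ps"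
  have L: "?L \<in> set ps" using valid_state_path_nonempty[OF assms(1)] by simp
  then have "finite ?L" "?L \<subseteq> V" using valid_state_finite_block[OF assms(1)] by blast+
  obtain u where "u \<in> ?L" using valid_state_block_nonempty[OF assms(1) L] by blast
  obtain z where "z \<in> V" "z \<notin> ?L"
  proof (cases bd)
    case None
    then have "infinite V" using boundary by simp
    then have "\<not> V \<subseteq> ?L" using \<open>finite ?L\<close> finite_subset by blast
    then show ?thesis using that by blast
  next
    case (Some d)
    then have "d \<in> V" using boundary by simp
    moreover have "d \<notin> ?L" using assms(2) Some by (simp add: stopped_def)
    ultimately show ?thesis using that by blast
  qed
  have "u \<in> V" using \<open>u \<in> ?L\<close> \<open>?L \<subseteq> V\<close> by blast
  have "(u, z) \<in> {(tlv e, hdv e) | e. e \<in> E}\<^sup>*"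
    using connected \<open>u \<in> V\<close> \<open>z \<in> V\<close> unfolding connected_graph_def by simp
  then have "\<exists>e\<in>E. tlv e \<in> ?L \<and> hdv e \<notin> ?L"
    using \<open>u \<in> ?L\<close> \<open>z \<notin> ?L\<close> by (rule out_edge_of_reachable)
  then show ?thesis
    by (auto simp: cur_out_def out_edges_def)
qed

lemma cur_out_finite_nonempty:
  assumes "valid_state st" "\<not> stopped bd st"
  shows "finite (cur_out E tlv hdv st)" "cur_out E tlv hdv st \<noteq> {}"
  using finite_cur_out[of "fst st" "snd st"] cur_out_nonempty[of "fst st" "snd st"] assms by simp_all

lemma valid_extend:
  assumes valid: "valid_state (P, ps)" and "e \<in> E" "P (hdv e) \<notin> set ps"
  shows "valid_state (P, ps @ [P (hdv e)])"
proof (rule valid_stateI)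
  have "P (hdv e) = {hdv e}" using valid_state_singleton[OF valid assms(3)] .
  moreover have "hdv e \<in> V" using multigraph assms(2) by (simp add: multigraph_def)
  ultimately show "finite B \<and> B \<subseteq> V" if "B \<in> set (ps @ [P (hdv e)])" for B
    using that valid_state_finite_block[OF valid] by auto
  show "v \<in> P v" for v by (rule valid_state_mem_block[OF valid])
  show "v \<in> P u \<Longrightarrow> P v = P u" for u v by (rule valid_state_block_eq[OF valid])
  show "set (ps @ [P (hdv e)]) \<subseteq> range P" using valid_state_path_blocks[OF valid] by auto
  show "distinct (ps @ [P (hdv e)])" using valid_state_distinct[OF valid] assms(3) by simp
  show "ps @ [P (hdv e)] \<noteq> []" by simp
  show "P v = {v}" if "P v \<notin> set (ps @ [P (hdv e)])" for v
    using that valid_state_singleton[OF valid] by simp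
qed

lemma collapsed_block_iff:
  assumes "valid_state (P, pre @ H # post)"
  shows "u \<in> \<Union> (set (H # post)) \<longleftrightarrow> P u \<in> set (H # post)"
proof
  assume "u \<in> \<Union> (set (H # post))"
  then obtain B where "B \<in> set (H # post)" "u \<in> B" by blast
  moreover from \<open>B \<in> set (H # post)\<close> have "B \<in> set (pre @ H # post)" by auto
  ultimately show "P u \<in> set (H # post)" using valid_state_block_eqI[OF assms] by metis
next
  assume "P u \<in> set (H # post)"
  then show "u \<in> \<Union> (set (H # post))" using valid_state_mem_block[OF assms, of u] by blast
qed

lemma collapsed_block_notin_prefix:
  assumes valid: "valid_state (P, pre @ H # post)"
  shows "\<Union> (set (H # post)) \<notin> set pre"
proof
  assume C: "\<Union> (set (H # post)) \<in> set pre"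
  obtain h where "h \<in> H" using valid_state_block_nonempty[OF valid] by fastforce
  then have "P h = H" using valid_state_block_eqI[OF valid] by simp
  moreover have "P h = \<Union> (set (H # post))"
  proof (rule valid_state_block_eqI[OF valid])
    show "\<Union> (set (H # post)) \<in> set (pre @ H # post)" using C by simp
    show "h \<in> \<Union> (set (H # post))" using \<open>h \<in> H\<close> by simp
  qed
  ultimately show False using C valid_state_distinct[OF valid] by auto
qed

lemma valid_contract:
  assumes valid: "valid_state (P, pre @ H # post)"
  defines "C \<equiv> \<Union> (set (H # post))"
  shows "valid_state ((\<lambda>u. if u \<in> C then C else P u), pre @ [C])"
proof -
  let ?P' = "\<lambda>u. if u \<in> C then C else P u"
  have C_iff: "u \<in> C \<longleftrightarrow> P u \<in> set (H # post)" for u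
    unfolding C_def by (rule collapsed_block_iff[OF valid])
  have pre: "B \<notin> set (H # post)" if "B \<in> set pre" for B
    using valid_state_distinct[OF valid] that by auto
  obtain h where "h \<in> H" using valid_state_block_nonempty[OF valid] by fastforce
  then have "h \<in> C" by (auto simp: C_def)
  show ?thesis
  proof (rule valid_stateI)
    show "v \<in> ?P' v" for v using valid_state_mem_block[OF valid] by simp
    show "?P' v = ?P' u" if "v \<in> ?P' u" for u v
    proof (cases "u \<in> C")
      case False
      then have "P v = P u" using that valid_state_block_eq[OF valid] by simp
      then show ?thesis using C_iff[of u] C_iff[of v] by simp
    qed (use that in simp)
    have "B \<in> range ?P'" if "B \<in> set pre" for B
    proof -
      have "B \<in> set (pre @ H # post)" using that by simp
      with valid_state_path_blocks[OF valid] obtain w where "B = P w" by blast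
      moreover have "w \<notin> C" using C_iff[of w] pre[OF that] \<open>B = P w\<close> by simp
      ultimately show ?thesis by (simp add: range_eqI)
    qed
    moreover have "C \<in> range ?P'" using \<open>h \<in> C\<close> by (simp add: range_eqI)
    ultimately show "set (pre @ [C]) \<subseteq> range ?P'" by auto
    have "C \<notin> set pre" unfolding C_def by (rule collapsed_block_notin_prefix[OF valid])
    then show "distinct (pre @ [C])" using valid_state_distinct[OF valid] by simp
    show "pre @ [C] \<noteq> []" by simp
    show "finite B \<and> B \<subseteq> V" if "B \<in> set (pre @ [C])" for B
      using that valid_state_finite_block[OF valid] by (auto simp: C_def)
    show "?P' v = {v}" if "?P' v \<notin> set (pre @ [C])" for v
    proof -
      have "v \<notin> C" using that by auto
      then have "P v \<notin> set (pre @ H # post)" using that C_iff[of v] by simp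
      then show ?thesis using valid_state_singleton[OF valid] \<open>v \<notin> C\<close> by simp
    qed
  qed
qed

lemma walk_step_cases:
  assumes "valid_state (P, ps)"
  obtains (extend) "P (hdv e) \<notin> set ps" "walk_step hdv (P, ps) e = (P, ps @ [P (hdv e)])"
  | (contract) pre post where "ps = pre @ P (hdv e) # post"
      "walk_step hdv (P, ps) e = (let C = \<Union> (set (P (hdv e) # post)) in ((\<lambda>u. if u \<in> C then C else P u), pre @ [C]))"
proof (cases "P (hdv e) \<in> set ps")
  case True
  then obtain pre post where ps: "ps = pre @ P (hdv e) # post" by (meson split_list)
  have "distinct (pre @ P (hdv e) # post)" using valid_state_distinct[OF assms] ps by simp
  then have "P (hdv e) \<notin> set pre" by simp
  then have "walk_step hdv (P, ps) e = (let C = \<Union> (set (P (hdv e) # post))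
      in ((\<lambda>u. if u \<in> C then C else P u), pre @ [C]))"
    unfolding ps by (rule walk_step_contract) (rule refl)
  with ps show ?thesis by (rule contract)
next
  case False
  then show ?thesis using walk_step_extend[where P=P and hdv=hdv and e=e, OF False] by (rule extend)
qed

lemma cur_out_last_block:
  assumes "valid_state (P, ps)" "e \<in> cur_out E tlv hdv (P, ps)"
  shows "P (tlv e) = last ps" "hdv e \<notin> last ps"
proof -
  have "last ps \<in> set ps" using valid_state_path_nonempty[OF assms(1)] by simp
  moreover have "tlv e \<in> last ps" "hdv e \<notin> last ps"
    using assms(2) by (simp_all add: cur_out_def out_edges_def)
  ultimately show "P (tlv e) = last ps" "hdv e \<notin> last ps"
    using valid_state_block_eqI[OF assms(1)] by simp_all
qed

lemma valid_walk_step: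
  assumes "valid_state st" "e \<in> cur_out E tlv hdv st"
  shows "valid_state (walk_step hdv st e)"
proof (cases st)
  case (Pair P ps)
  note valid = assms(1)[unfolded Pair]
  have "e \<in> E" using assms(2) by (rule subsetD[OF cur_out_subset])
  have "valid_state (walk_step hdv (P, ps) e)"
    using valid
  proof (cases rule: walk_step_cases[where e=e])
    case extend
    then show ?thesis using valid_extend[OF valid \<open>e \<in> E\<close>] by simp
  next
    case (contract pre post)
    have "valid_state (P, pre @ P (hdv e) # post)" using valid contract(1) by simp
    then show ?thesis unfolding contract(2) Let_def by (rule valid_contract)
  qed
  then show ?thesis unfolding Pair .
qed

lemma spent_extend:
  assumes valid: "valid_state (P, ps)" and out: "e \<in> cur_out E tlv hdv (P, ps)"
    and "spent (P, ps) d \<or> d = e"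
  shows "spent (P, ps @ [P (hdv e)]) d"
proof (cases "d = e")
  case True
  have "ps = butlast ps @ [last ps]" using valid_state_path_nonempty[OF valid] by simp
  then have "ps @ [P (hdv e)] = butlast ps @ P (tlv e) # P (hdv e) # []"
    using cur_out_last_block(1)[OF valid out] by (metis append.assoc append_Cons append_Nil)
  then show ?thesis using True by (simp only: spent.simps) blast
next
  case False
  then show ?thesis using assms(3) by (simp only: spent.simps) (metis append.assoc append_Cons)
qed

lemma spent_contract:
  assumes valid: "valid_state (P, pre @ H # post)" and out: "e \<in> cur_out E tlv hdv (P, pre @ H # post)"
    and "P (hdv e) = H" and "spent (P, pre @ H # post) d \<or> d = e"
  defines "C \<equiv> \<Union> (set (H # post))"
  shows "spent ((\<lambda>u. if u \<in> C then C else P u), pre @ [C]) d"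
proof -
  let ?f = "\<lambda>X. if X \<in> set (H # post) then C else X"
  have "(\<lambda>u. if u \<in> C then C else P u) = (\<lambda>u. ?f (P u))"
    using collapsed_block_iff[OF valid] unfolding C_def by auto
  moreover have "spent ((\<lambda>u. ?f (P u)), pre @ [C]) d"
  proof (cases "d = e")
    case True
    have "last (pre @ H # post) \<in> set (H # post)" by simp
    then show ?thesis using True cur_out_last_block(1)[OF valid out] \<open>P (hdv e) = H\<close> by simp
  next
    case False
    then consider "P (tlv d) = P (hdv d)" | xs ys where "pre @ H # post = xs @ P (tlv d) # P (hdv d) # ys"
      using assms(4)[unfolded spent.simps] by metis
    then show ?thesis
    proof cases
      case 2
      have "?f (P (tlv d)) = ?f (P (hdv d))
          \<or> (\<exists>xs' ys'. pre @ [C] = xs' @ ?f (P (tlv d)) # ?f (P (hdv d)) # ys')"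
        by (rule consecutive_after_collapse[OF valid_state_distinct[OF valid] 2]) simp
      then show ?thesis by simp
    qed simp
  qed
  ultimately show ?thesis by simp
qed

lemma spent_walk_step:
  assumes "valid_state st" "e \<in> cur_out E tlv hdv st" "spent st d \<or> d = e"
  shows "spent (walk_step hdv st e) d"
proof (cases st)
  case (Pair P ps)
  note valid = assms(1)[unfolded Pair] and out = assms(2)[unfolded Pair]
    and spent = assms(3)[unfolded Pair]
  have "spent (walk_step hdv (P, ps) e) d"
    using valid
  proof (cases rule: walk_step_cases[where e=e])
    case extend
    then show ?thesis using spent_extend[OF valid out spent] by simp
  next
    case (contract pre post)
    then have "valid_state (P, pre @ P (hdv e) # post)" "e \<in> cur_out E tlv hdv (P, pre @ P (hdv e) # post)"
      "spent (P, pre @ P (hdv e) # post) d \<or> d = e"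
      using valid out spent by simp_all
    then show ?thesis unfolding contract(2) Let_def by (rule spent_contract[OF _ _ refl])
  qed
  then show ?thesis unfolding Pair .
qed

lemma spent_not_cur_out:
  assumes "valid_state st" "spent st d"
  shows "d \<notin> cur_out E tlv hdv st"
proof (cases st)
  case (Pair P ps)
  note valid = assms(1)[unfolded Pair]
  have "d \<notin> cur_out E tlv hdv (P, ps)"
  proof
    assume out: "d \<in> cur_out E tlv hdv (P, ps)"
    have tl: "P (tlv d) = last ps" and hd: "hdv d \<notin> last ps"
      using cur_out_last_block[OF valid out] by simp_all
    have "P (tlv d) \<noteq> P (hdv d)"
      using hd tl valid_state_mem_block[OF valid, of "hdv d"] by auto
    then obtain xs ys where ps: "ps = xs @ P (tlv d) # P (hdv d) # ys"
      using assms(2) Pair by auto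
    have "last ps \<in> set (P (hdv d) # ys)" using ps by simp
    moreover have "P (tlv d) \<notin> set (P (hdv d) # ys)" using valid_state_distinct[OF valid] ps by simp
    ultimately show False using tl by simp
  qed
  then show ?thesis unfolding Pair .
qed

section \<open>The law of the CLEB walk\<close>

lemma lcrw_prob_nonneg: "0 \<le> lcrw_prob E tlv hdv bd st ss"
  by (induction ss arbitrary: st) (auto split: option.splits)

lemma lcrw_prob_stopped:
  "stopped bd st \<Longrightarrow> lcrw_prob E tlv hdv bd st ss = (if ss = replicate (length ss) None then 1 else 0)"
  by (induction ss) auto

definition cleb_step :: "'v wstate \<times> ('e \<Rightarrow> real) \<Rightarrow> 'v wstate \<times> ('e \<Rightarrow> real)" where
  "cleb_step = (\<lambda>(st, U). if stopped bd st then (st, U) else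
     (let Out = cur_out E tlv hdv st; e = cleb_choice Out U in
       (walk_step hdv st e, \<lambda>f. if f \<in> Out then U f - U e else U f)))"

definition cleb_pick :: "'v wstate \<times> ('e \<Rightarrow> real) \<Rightarrow> 'e option" where
  "cleb_pick = (\<lambda>(st, U). if stopped bd st then None else Some (cleb_choice (cur_out E tlv hdv st) U))"

definition cleb_picks :: "nat \<Rightarrow> 'v wstate \<times> ('e \<Rightarrow> real) \<Rightarrow> 'e option list" where
  "cleb_picks k p = map (\<lambda>i. cleb_pick ((cleb_step ^^ i) p)) [0..<k]"

lemma cleb_state_eq_funpow: "cleb_state E tlv hdv bd x w n = (cleb_step ^^ n) (init_state x, w)"
  by (induction n) (simp_all add: cleb_step_def Let_def case_prod_beta)

lemma cleb_sel_eq_cleb_pick: "cleb_sel E tlv hdv bd x w n = cleb_pick ((cleb_step ^^ n) (init_state x, w))"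
  by (simp add: cleb_sel_def cleb_pick_def cleb_state_eq_funpow[symmetric] Let_def case_prod_beta)

lemma cleb_picks_Suc: "cleb_picks (Suc k) p = cleb_pick p # cleb_picks k (cleb_step p)"
  unfolding cleb_picks_def by (simp add: map_upt_Suc funpow_Suc_right del: upt_Suc funpow.simps)

lemma cleb_picks_stopped: "stopped bd st \<Longrightarrow> cleb_picks k (st, U) = replicate k None"
  by (induction k) (simp_all add: cleb_picks_def[of 0] cleb_picks_Suc cleb_step_def cleb_pick_def)

lemma cleb_step_active:
  assumes "\<not> stopped bd st"
  shows "cleb_pick (st, U) = Some (cleb_choice (cur_out E tlv hdv st) U)"
    and "cleb_step (st, U) = (walk_step hdv st (cleb_choice (cur_out E tlv hdv st) U),
      \<lambda>f. if f \<in> cur_out E tlv hdv st then U f - U (cleb_choice (cur_out E tlv hdv st) U) else U f)"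
  using assms by (simp_all add: cleb_step_def cleb_pick_def Let_def)

lemma cleb_choice_in_cur_out:
  assumes "valid_state st" "\<not> stopped bd st"
  shows "cleb_choice (cur_out E tlv hdv st) U \<in> cur_out E tlv hdv st"
  using cur_out_finite_nonempty[OF assms] by (rule cleb_choice_min[THEN conjunct1])

lemma cleb_picks_spent_cong:
  assumes "valid_state st" "spent st d" "\<And>f. f \<noteq> d \<Longrightarrow> U' f = U f"
  shows "cleb_picks k (st, U') = cleb_picks k (st, U)"
  using assms
proof (induction k arbitrary: st U U')
  case (Suc k)
  show ?case
  proof (cases "stopped bd st")
    case False
    let ?Out = "cur_out E tlv hdv st"
    let ?e = "cleb_choice ?Out U"
    have "d \<notin> ?Out" using spent_not_cur_out Suc.prems by blast
    then have choice: "cleb_choice ?Out U' = ?e"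
      using Suc.prems(3) by (metis cleb_choice_cong)
    have "?e \<in> ?Out" using cleb_choice_in_cur_out[OF Suc.prems(1) False] .
    with \<open>d \<notin> ?Out\<close> have "U' ?e = U ?e" using Suc.prems(3) by metis
    let ?st' = "walk_step hdv st ?e"
    have steps: "cleb_step (st, U') = (?st', \<lambda>f. if f \<in> ?Out then U' f - U' ?e else U' f)"
      "cleb_step (st, U) = (?st', \<lambda>f. if f \<in> ?Out then U f - U ?e else U f)"
      using cleb_step_active(2)[OF False, of U'] cleb_step_active(2)[OF False, of U] unfolding choice
      by simp_all
    have "valid_state ?st'" by (rule valid_walk_step[OF Suc.prems(1) \<open>?e \<in> ?Out\<close>])
    moreover have "spent ?st' d"
      using spent_walk_step[OF Suc.prems(1) \<open>?e \<in> ?Out\<close>] Suc.prems(2) by blast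
    moreover have "(if f \<in> ?Out then U' f - U' ?e else U' f) = (if f \<in> ?Out then U f - U ?e else U f)"
      if "f \<noteq> d" for f
      using that Suc.prems(3) \<open>U' ?e = U ?e\<close> by simp
    ultimately have "cleb_picks k (?st', \<lambda>f. if f \<in> ?Out then U' f - U' ?e else U' f)
        = cleb_picks k (?st', \<lambda>f. if f \<in> ?Out then U f - U ?e else U f)"
      by (rule Suc.IH)
    then show ?thesis
      by (simp only: cleb_picks_Suc steps cleb_step_active(1)[OF False] choice)
  qed (simp add: cleb_picks_stopped)
qed (simp add: cleb_picks_def)

lemma cleb_picks_Cons_event:
  assumes valid: "valid_state st" and active: "\<not> stopped bd st" and e: "e \<in> cur_out E tlv hdv st"
  defines "Out \<equiv> cur_out E tlv hdv st"
  shows "{w \<in> space (exp_weights E). cleb_picks (Suc k) (st, w) = Some e # ss}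
    = {w \<in> space (exp_weights E). cleb_choice Out w = e} \<inter>
      residual_weights Out e -` {w \<in> space (exp_weights E). cleb_picks k (walk_step hdv st e, w) = ss}"
proof -
  have "cleb_picks k (cleb_step (st, w)) = cleb_picks k (walk_step hdv st e, residual_weights Out e w)"
    if "cleb_choice Out w = e" for w
  proof -
    have "cleb_step (st, w) = (walk_step hdv st e, \<lambda>f. if f \<in> Out then w f - w e else w f)"
      using cleb_step_active(2)[OF active, of w] unfolding that[unfolded Out_def] Out_def .
    moreover have "cleb_picks k (walk_step hdv st e, \<lambda>f. if f \<in> Out then w f - w e else w f)
        = cleb_picks k (walk_step hdv st e, residual_weights Out e w)"
      using valid_walk_step[OF valid e] spent_walk_step[OF valid e]
      by (intro cleb_picks_spent_cong) (auto simp: residual_weights_def)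
    ultimately show ?thesis by simp
  qed
  moreover have "residual_weights Out e w \<in> space (exp_weights E)" if "w \<in> space (exp_weights E)" for w
    using residual_weights_in_space[OF cur_out_subset e that] by (simp add: Out_def)
  ultimately show ?thesis
    using cleb_step_active(1)[OF active] by (auto simp: cleb_picks_Suc Out_def)
qed

lemma emeasure_cleb_picks_Cons:
  assumes valid: "valid_state st" and active: "\<not> stopped bd st" and e: "e \<in> cur_out E tlv hdv st"
    and A: "{w \<in> space (exp_weights E). cleb_picks k (walk_step hdv st e, w) = ss} \<in> sets (exp_weights E)"
    and p: "emeasure (exp_weights E) {w \<in> space (exp_weights E). cleb_picks k (walk_step hdv st e, w) = ss}
      = ennreal p" "0 \<le> p"
  shows "{w \<in> space (exp_weights E). cleb_picks (Suc k) (st, w) = Some e # ss} \<in> sets (exp_weights E)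
    \<and> emeasure (exp_weights E) {w \<in> space (exp_weights E). cleb_picks (Suc k) (st, w) = Some e # ss}
      = ennreal (p / real (card (cur_out E tlv hdv st)))"
proof -
  let ?M = "exp_weights E" and ?Out = "cur_out E tlv hdv st"
  let ?A = "{w \<in> space ?M. cleb_picks k (walk_step hdv st e, w) = ss}"
  let ?C = "{w \<in> space ?M. cleb_choice ?Out w = e}"
  have Out: "finite ?Out" "?Out \<noteq> {}" "?Out \<subseteq> E"
    using cur_out_finite_nonempty[OF valid active] cur_out_subset[of E tlv hdv st] by simp_all
  have "?C \<inter> residual_weights ?Out e -` ?A = ?C \<inter> (residual_weights ?Out e -` ?A \<inter> space ?M)"
    by blast
  then have "?C \<inter> residual_weights ?Out e -` ?A \<in> sets ?M"
    using sets_cleb_choice[OF Out(1,3)] measurable_sets[OF measurable_residual_weights[OF Out(3) e] A]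
    by auto
  moreover have "emeasure ?M (?C \<inter> residual_weights ?Out e -` ?A) = ennreal p / of_nat (card ?Out)"
    using emeasure_cleb_choice_residual[OF Out(1,3) e A] p(1) by simp
  moreover have "\<dots> = ennreal (p / real (card ?Out))"
    using divide_ennreal[OF p(2), of "real (card ?Out)"] Out(1,2)
    by (simp add: ennreal_of_nat_eq_real_of_nat card_gt_0_iff)
  ultimately show ?thesis
    unfolding cleb_picks_Cons_event[OF valid active e] by simp
qed

lemma emeasure_cleb_picks:
  assumes "valid_state st"
  shows "{w \<in> space (exp_weights E). cleb_picks (length ss) (st, w) = ss} \<in> sets (exp_weights E)
    \<and> emeasure (exp_weights E) {w \<in> space (exp_weights E). cleb_picks (length ss) (st, w) = ss}
      = ennreal (lcrw_prob E tlv hdv bd st ss)"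
  using assms
proof (induction ss arbitrary: st)
  case Nil
  show ?case
    using prob_space.emeasure_space_1[OF prob_space_exp_weights] by (simp add: cleb_picks_def)
next
  case (Cons s ss)
  let ?M = "exp_weights E" and ?Out = "cur_out E tlv hdv st"
  interpret prob_space ?M by (rule prob_space_exp_weights)
  show ?case
  proof (cases "stopped bd st")
    case True
    then show ?thesis
      by (cases "s # ss = replicate (length (s # ss)) None")
        (simp_all only: cleb_picks_stopped lcrw_prob_stopped, auto simp: emeasure_space_1)
  next
    case active: False
    show ?thesis
    proof (cases "\<exists>e\<in>?Out. s = Some e")
      case True
      then obtain e where s: "s = Some e" and e: "e \<in> ?Out" by blast
      note IH = Cons.IH[OF valid_walk_step[OF Cons.prems e]]
      show ?thesis
        using emeasure_cleb_picks_Cons[OF Cons.prems active e IH[THEN conjunct1] IH[THEN conjunct2]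
            lcrw_prob_nonneg] s e active
        by simp
    next
      case False
      then have event: "{w \<in> space ?M. cleb_picks (length (s # ss)) (st, w) = s # ss} = {}"
        using cleb_choice_in_cur_out[OF Cons.prems active] cleb_step_active(1)[OF active]
        by (auto simp: cleb_picks_Suc)
      have "lcrw_prob E tlv hdv bd st (s # ss) = 0"
        using False active by (auto split: option.split)
      then show ?thesis unfolding event by simp
    qed
  qed
qed

end

theorem mainTheorem12:
  fixes V :: "'v set" and E :: "'e set" and tlv hdv :: "'e \<Rightarrow> 'v" and rv :: "'e \<Rightarrow> 'e"
    and bd :: "'v option" and x :: 'v
  assumes "multigraph V E tlv hdv rv"
    and "locally_finite V E tlv"
    and "connected_graph V E tlv hdv"
    and "(finite V \<and> (\<exists>d\<in>V. bd = Some d)) \<or> (infinite V \<and> bd = None)"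
    and "x \<in> V"
  shows "\<forall>ss :: 'e option list.
           measure (exp_weights E)
             {w \<in> space (exp_weights E). map (cleb_sel E tlv hdv bd x w) [0..<length ss] = ss}
           = lcrw_prob E tlv hdv bd (init_state x) ss"
proof
  fix ss :: "'e option list"
  interpret cleb_graph V E tlv hdv rv bd
    using assms(1-4) by unfold_locales
  have "map (cleb_sel E tlv hdv bd x w) [0..<length ss] = cleb_picks (length ss) (init_state x, w)" for w
    by (simp add: cleb_picks_def cleb_sel_eq_cleb_pick)
  moreover have "emeasure (exp_weights E) {w \<in> space (exp_weights E). cleb_picks (length ss) (init_state x, w) = ss}
      = ennreal (lcrw_prob E tlv hdv bd (init_state x) ss)"
    using emeasure_cleb_picks[OF valid_init_state[OF assms(5)]] by blast
  ultimately show "measure (exp_weights E)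
      {w \<in> space (exp_weights E). map (cleb_sel E tlv hdv bd x w) [0..<length ss] = ss}
    = lcrw_prob E tlv hdv bd (init_state x) ss"
    by (simp add: measure_def lcrw_prob_nonneg)
qed

end
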